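(* Fix $\epsilon>0$, $\delta>0$ and an integer $L\geq 2$ such that $2\epsilon<\delta\leq 1/L$. Then the minimum number of queries $N^*(\epsilon,\delta,L)$ of an $(\epsilon,\delta,L)$-private learner strategy satisfies \[ \max\Big\{\log\frac{1}{\epsilon},\ \log\frac{\delta}{\epsilon}+2L-4\Big\}\ \leq\ N^*(\epsilon,\delta,L)\ \leq\ \log\frac{1}{L\epsilon}+2L . \]
   Context: Private sequential learning model. An unknown true value $v^*\in[0,1)$. A learner submits queries $q_k\in[0,1)$ and receives responses $r_k=\mathbb{I}(v^*\geq q_k)$. A learner strategy $\phi$ of length $N$ uses a random seed $Y$ uniformly distributed on $\{1,2,\dots,\mathcal{Y}\}$ (for a large integer $\mathcal{Y}$) and consists of query functions $\phi_1,\dots,\phi_N$ and an estimation function $\phi^E$: $q_1=\phi_1(Y)$, $q_k=\phi_k(r_1,\dots,r_{k-1},Y)$ for $k=2,\dots,N$, and the estimate is $\hat x=\phi^E(r_1,\dots,r_N,Y)\in[0,1)$; queries within a run are distinct. $\Phi_N$ denotes the set of all such strategies of length $N$. Write $\hat x(x,y)$ for the estimate when $v^*=x$, $Y=y$. For $x\in[0,1)$, let $\mathcal{Q}(x)=\{\overline q\in[0,1)^N:\mathbb{P}(Q_x=\overline q)>0\}$, where $Q_x$ is the (random, through $Y$) query sequence when $v^*=x$. The adversary's information set for $\overline q$ is $\mathcal{I}(\overline q)=\{x\in[0,1):\overline q\in\mathcal{Q}(x)\}$. A set $\mathcal{E}\subset\mathbb{R}$ is $(\delta,L)$-coverable if it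 is contained in a union of $L$ closed intervals each of length at most $\delta$; its $\delta$-cover number $C_\delta(\mathcal{E})$ is the least $L\in\mathbb{N}$ such that $\mathcal{E}$ is $(\delta,L)$-coverable. A strategy $\phi\in\Phi_N$ is $(\epsilon,\delta,L)$-private (for $L\geq2$ integer) if (1) $\mathbb{P}(|\hat x(x,Y)-x|\leq\epsilon/2)=1$ for all $x\in[0,1)$, and (2) $C_\delta(\mathcal{I}(\overline q))\geq L$ for every $x\in[0,1)$ and every $\overline q\in\mathcal{Q}(x)$. $N^*(\epsilon,\delta,L)=\min\{N\in\mathbb{N}:\Phi_N\text{ contains an }(\epsilon,\delta,L)\text{-private strategy}\}$. All logarithms are base 2, and non-integer quantities in the bounds are understood rounded up to the nearest integer (e.g., $\lceil\log(1/(L\epsilon))\rceil$). *)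

theory Defs
  imports Complex_Main
begin

text \<open>A learner strategy of length N is given by a seed range Yc (seed Y uniform on {1..Yc}),
query functions qf k rs y (the (k+1)-th query, k < N, given the first k responses rs and seed y)
and an estimation function est rs y.\<close>

type_synonym query_fun = "nat \<Rightarrow> bool list \<Rightarrow> nat \<Rightarrow> real"
type_synonym est_fun = "bool list \<Rightarrow> nat \<Rightarrow> real"

fun resps :: "query_fun \<Rightarrow> real \<Rightarrow> nat \<Rightarrow> nat \<Rightarrow> bool list" where
  "resps qf x y 0 = []"
| "resps qf x y (Suc k) = resps qf x y k @ [x \<ge> qf k (resps qf x y k) y]"

definition queries :: "query_fun \<Rightarrow> nat \<Rightarrow> real \<Rightarrow> nat \<Rightarrow> real list" where
  "queries qf N x y = map (\<lambda>k. qf k (resps qf x y k) y) [0..<N]"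

definition estimate :: "query_fun \<Rightarrow> est_fun \<Rightarrow> nat \<Rightarrow> real \<Rightarrow> nat \<Rightarrow> real" where
  "estimate qf est N x y = est (resps qf x y N) y"

definition is_strategy :: "nat \<Rightarrow> nat \<Rightarrow> query_fun \<Rightarrow> est_fun \<Rightarrow> bool" where
  "is_strategy N Yc qf est \<longleftrightarrow> Yc \<ge> 1
     \<and> (\<forall>k<N. \<forall>rs. \<forall>y\<in>{1..Yc}. qf k rs y \<in> {0..<1})
     \<and> (\<forall>rs. \<forall>y\<in>{1..Yc}. est rs y \<in> {0..<1})
     \<and> (\<forall>x\<in>{0..<1}. \<forall>y\<in>{1..Yc}. distinct (queries qf N x y))"

text \<open>Q(x): query sequences with positive probability (Y uniform on {1..Yc}).\<close>
definition Qset :: "query_fun \<Rightarrow> nat \<Rightarrow> nat \<Rightarrow> real \<Rightarrow> real list set" where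
  "Qset qf N Yc x = {qs. \<exists>y\<in>{1..Yc}. queries qf N x y = qs}"

definition info_set :: "query_fun \<Rightarrow> nat \<Rightarrow> nat \<Rightarrow> real list \<Rightarrow> real set" where
  "info_set qf N Yc qs = {x \<in> {0..<1}. qs \<in> Qset qf N Yc x}"

definition coverable :: "real \<Rightarrow> nat \<Rightarrow> real set \<Rightarrow> bool" where
  "coverable \<delta> L E \<longleftrightarrow> (\<exists>a b :: nat \<Rightarrow> real. (\<forall>i<L. a i \<le> b i \<and> b i - a i \<le> \<delta>)
      \<and> E \<subseteq> (\<Union>i<L. {a i..b i}))"

definition cover_number :: "real \<Rightarrow> real set \<Rightarrow> nat" where
  "cover_number \<delta> E = (LEAST L. coverable \<delta> L E)"

definition is_private :: "real \<Rightarrow> real \<Rightarrow> nat \<Rightarrow> nat \<Rightarrow> nat \<Rightarrow> query_fun \<Rightarrow> est_fun \<Rightarrow> bool" where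
  "is_private \<epsilon> \<delta> L N Yc qf est \<longleftrightarrow> is_strategy N Yc qf est
     \<and> (\<forall>x\<in>{0..<1}. \<forall>y\<in>{1..Yc}. \<bar>estimate qf est N x y - x\<bar> \<le> \<epsilon> / 2)
     \<and> (\<forall>x\<in>{0..<1}. \<forall>qs\<in>Qset qf N Yc x. cover_number \<delta> (info_set qf N Yc qs) \<ge> L)"

definition Nstar :: "real \<Rightarrow> real \<Rightarrow> nat \<Rightarrow> nat" where
  "Nstar \<epsilon> \<delta> L = (LEAST N. \<exists>Yc qf est. is_private \<epsilon> \<delta> L N Yc qf est)"

end

theory Submission
  imports Defs
begin

text \<open>Fix a seed. Points of [0, w) that are more than \<epsilon> apart must receive different
  responses, and only queries inside (0, w) can separate them, so Kraft's inequality on the decision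
  tree gives a point whose run asks at least log (w / \<epsilon>) queries in (0, w); w = 1 gives
  log (1 / \<epsilon>). For w = \<delta>, privacy forces further queries above \<delta>: the adversary's information
  set cannot be covered by L intervals of length \<delta>, so above \<delta> it contains L - 1 points with gaps
  larger than 2 \<epsilon>. All of them produce the observed queries and are estimated within \<epsilon> / 2, so
  there is a query just above each of them but the last and just below each but the first.

  Cut [0, 1) into L blocks of 2^n cells, with L 2^n \<ge> 1 / \<epsilon>. Then 2 L probes find
  the block of x and whether x lies in its first cell; n more queries binary-search the cell of x,
  except for x in a first cell, where they binary-search a cell drawn by the seed. Every query
  sequence is therefore a binary-search sequence, and the seed that draws the searched cell makes
  the L first-cell points, which are more than 1 / L \<ge> \<delta> apart, all produce it.\<close>

section \<open>Separating queries and Kraft's inequality\<close>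

lemma length_resps [simp]: "length (resps qf x y k) = k"
  by (induction k) auto

lemma nth_resps: "k < K \<Longrightarrow> resps qf x y K ! k = (x \<ge> qf k (resps qf x y k) y)"
proof (induction K)
  case (Suc K)
  then show ?case by (cases "k = K") (auto simp: nth_append)
qed simp

lemma resps_cong:
  assumes "\<And>k. k < K \<Longrightarrow> (x \<ge> qf k (resps qf x y k) y) = (x' \<ge> qf k (resps qf x y k) y)"
  shows "resps qf x y K = resps qf x' y K"
  using assms
proof (induction K)
  case (Suc K)
  then have "resps qf x y K = resps qf x' y K" by simp
  with Suc.prems[of K] show ?case by simp
qed simp

lemma length_queries [simp]: "length (queries qf N x y) = N"
  by (simp add: queries_def)

lemma nth_queries: "k < N \<Longrightarrow> queries qf N x y ! k = qf k (resps qf x y k) y"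
  by (simp add: queries_def)

lemma dist_le_if_same_resps:
  assumes "resps qf x y N = resps qf x' y N"
    and "\<bar>estimate qf est N x y - x\<bar> \<le> \<epsilon> / 2" "\<bar>estimate qf est N x' y - x'\<bar> \<le> \<epsilon> / 2"
  shows "\<bar>x - x'\<bar> \<le> \<epsilon>"
proof -
  have "estimate qf est N x y = estimate qf est N x' y"
    using assms(1) by (simp add: estimate_def)
  then show ?thesis using assms(2,3) by linarith
qed

lemma exists_separating_query:
  assumes "\<bar>estimate qf est N x y - x\<bar> \<le> \<epsilon> / 2" "\<bar>estimate qf est N x' y - x'\<bar> \<le> \<epsilon> / 2"
    and "\<epsilon> < \<bar>x - x'\<bar>"
  shows "\<exists>q\<in>set (queries qf N x y). min x x' < q \<and> q \<le> max x x'"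
proof (rule ccontr)
  assume none: "\<not> ?thesis"
  have "resps qf x y N = resps qf x' y N"
  proof (rule resps_cong)
    fix k assume "k < N"
    then have "qf k (resps qf x y k) y \<in> set (queries qf N x y)"
      by (auto simp: queries_def)
    with none show "(x \<ge> qf k (resps qf x y k) y) = (x' \<ge> qf k (resps qf x y k) y)"
      by (auto simp: min_def max_def split: if_splits)
  qed
  with assms show False using dist_le_if_same_resps by fastforce
qed

definition queries_in :: "query_fun \<Rightarrow> nat \<Rightarrow> nat \<Rightarrow> real set \<Rightarrow> nat \<Rightarrow> real \<Rightarrow> nat" where
  "queries_in qf N y S k x = card {i \<in> {k..<N}. qf i (resps qf x y i) y \<in> S}"

lemma queries_in_Suc:
  assumes "k < N"
  shows "queries_in qf N y S k x = queries_in qf N y S (Suc k) x + of_bool (qf k (resps qf x y k) y \<in> S)"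
proof -
  have "{i \<in> {k..<N}. qf i (resps qf x y i) y \<in> S} =
      (if qf k (resps qf x y k) y \<in> S then insert k else id) {i \<in> {Suc k..<N}. qf i (resps qf x y i) y \<in> S}"
    using assms by (auto simp: le_eq_less_or_eq)
  then show ?thesis
    by (simp add: queries_in_def)
qed

lemma queries_in_le: "queries_in qf N y S k x \<le> N"
  unfolding queries_in_def by (rule order_trans[OF card_mono[of "{..<N}"]]) auto

text \<open>Kraft's inequality for the decision tree of a fixed seed: a query that splits P halves the
  weight of every point of P, and only queries in S can split P.\<close>

lemma kraft_inequality:
  assumes "k \<le> N" "finite P"
    and "\<forall>x\<in>P. \<forall>x'\<in>P. resps qf x y k = resps qf x' y k"
    and "\<forall>x\<in>P. \<forall>x'\<in>P. resps qf x y N = resps qf x' y N \<longrightarrow> x = x'"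
    and "\<forall>a\<in>P. \<forall>b\<in>P. {a<..b} \<subseteq> S"
  shows "(\<Sum>x\<in>P. (1/2::real) ^ queries_in qf N y S k x) \<le> 1"
  using assms
proof (induction k arbitrary: P rule: inc_induct)
  case base
  show ?case
  proof (cases "P = {}")
    case False
    then obtain a where "a \<in> P" by auto
    with base.prems have "P = {a}" by blast
    then show ?thesis by (simp add: power_le_one)
  qed simp
next
  case (step k)
  show ?case
  proof (cases "P = {}")
    case False
    then obtain x0 where "x0 \<in> P" by auto
    define q where "q = qf k (resps qf x0 y k) y"
    have query: "qf k (resps qf x y k) y = q" if "x \<in> P" for x
    proof -
      have "resps qf x y k = resps qf x0 y k" using step.prems(2) \<open>x0 \<in> P\<close> that by blast
      then show ?thesis by (simp add: q_def)
    qed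
    define part where "part b = {x \<in> P. (q \<le> x) = b}" for b
    have part_sum: "(\<Sum>x\<in>part b. (1/2::real) ^ queries_in qf N y S (Suc k) x) \<le> 1" for b
    proof (rule step.IH)
      show "finite (part b)" using step.prems(1) by (simp add: part_def)
      show "\<forall>x\<in>part b. \<forall>x'\<in>part b. resps qf x y (Suc k) = resps qf x' y (Suc k)"
      proof (intro ballI)
        fix x x' assume "x \<in> part b" "x' \<in> part b"
        then have "x \<in> P" "x' \<in> P" "(q \<le> x) = (q \<le> x')" by (auto simp: part_def)
        moreover from this have "resps qf x y k = resps qf x' y k" using step.prems(2) by blast
        ultimately show "resps qf x y (Suc k) = resps qf x' y (Suc k)" by (simp add: query)
      qed
      show "\<forall>x\<in>part b. \<forall>x'\<in>part b. resps qf x y N = resps qf x' y N \<longrightarrow> x = x'"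
        using step.prems(3) by (simp add: part_def)
      show "\<forall>a\<in>part b. \<forall>b'\<in>part b. {a<..b'} \<subseteq> S"
        using step.prems(4) by (simp add: part_def)
    qed
    have split: "(\<Sum>x\<in>P. f x) = (\<Sum>x\<in>part False. f x) + (\<Sum>x\<in>part True. f x)" for f :: "real \<Rightarrow> real"
      using step.prems(1) by (subst sum.union_disjoint[symmetric]) (auto simp: part_def intro: sum.cong)
    have charge: "queries_in qf N y S k x = queries_in qf N y S (Suc k) x + of_bool (q \<in> S)" if "x \<in> P" for x
      using queries_in_Suc[OF step.hyps(2)] query[OF that] by simp
    show ?thesis
    proof (cases "part False = {} \<or> part True = {}")
      case True
      then obtain b where "P = part b" by (auto simp: part_def)
      then have "(\<Sum>x\<in>P. (1/2::real) ^ queries_in qf N y S k x)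
          \<le> (\<Sum>x\<in>P. (1/2::real) ^ queries_in qf N y S (Suc k) x)"
        by (intro sum_mono power_decreasing) (auto simp: charge)
      with part_sum[of b] \<open>P = part b\<close> show ?thesis by simp
    next
      case False
      then obtain a b where "a \<in> P" "b \<in> P" "a < q" "q \<le> b" by (auto simp: part_def)
      then have "q \<in> S" using step.prems(4) greaterThanAtMost_iff by blast
      then have "(\<Sum>x\<in>P. (1/2::real) ^ queries_in qf N y S k x)
          = (1/2) * (\<Sum>x\<in>P. (1/2::real) ^ queries_in qf N y S (Suc k) x)"
        by (simp add: charge sum_distrib_left cong: sum.cong)
      with part_sum[of False] part_sum[of True] show ?thesis by (simp add: split)
    qed
  qed simp
qed

lemma exists_separated_points:
  fixes \<epsilon> w :: real
  assumes "0 < \<epsilon>" "0 < w"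
  obtains P where "finite P" "P \<subseteq> {0..<w}" "w / \<epsilon> \<le> card P"
    "\<And>x x'. x \<in> P \<Longrightarrow> x' \<in> P \<Longrightarrow> x \<noteq> x' \<Longrightarrow> \<epsilon> < \<bar>x - x'\<bar>"
proof (cases "w \<le> \<epsilon>")
  case True
  then show ?thesis using assms by (intro that[of "{0}"]) auto
next
  case False
  define K where "K = nat \<lceil>w / \<epsilon>\<rceil>"
  have "real K = of_int \<lceil>w / \<epsilon>\<rceil>"
    using assms by (simp add: K_def)
  then have K: "w / \<epsilon> \<le> K" "real K < w / \<epsilon> + 1"
    using ceiling_correct[of "w / \<epsilon>"] by linarith+
  have "1 < w / \<epsilon>" using False assms by simp
  then have K1: "real K - 1 > 0" using K by linarith
  have Kw: "(real K - 1) * \<epsilon> < w" using K assms by (simp add: field_simps)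
  define g where "g = (\<epsilon> + w / (real K - 1)) / 2"
  have "\<epsilon> < w / (real K - 1)" using Kw K1 by (simp add: field_simps)
  moreover have "(real K - 1) * g = ((real K - 1) * \<epsilon> + w) / 2"
    using K1 by (simp add: g_def field_simps)
  ultimately have g: "\<epsilon> < g" "(real K - 1) * g < w"
    using Kw by (simp_all add: g_def)
  define P where "P = (\<lambda>i. real i * g) ` {..<K}"
  show ?thesis
  proof (rule that[of P])
    have "inj_on (\<lambda>i. real i * g) {..<K}"
      using g assms by (auto simp: inj_on_def)
    then show "w / \<epsilon> \<le> card P" using K by (simp add: P_def card_image)
    have "real i * g < w" if "i < K" for i
    proof -
      have "real i * g \<le> (real K - 1) * g"
        using that g assms by (intro mult_right_mono) auto
      with g show ?thesis by linarith
    qed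
    then show "P \<subseteq> {0..<w}" using g assms by (auto simp: P_def)
    show "\<epsilon> < \<bar>x - x'\<bar>" if xx': "x \<in> P" "x' \<in> P" "x \<noteq> x'" for x x'
    proof -
      obtain i i' where "x = real i * g" "x' = real i' * g" "i \<noteq> i'"
        using xx' by (auto simp: P_def)
      then have "\<bar>x - x'\<bar> = \<bar>real i - real i'\<bar> * g"
        using g assms by (simp add: abs_mult flip: left_diff_distrib)
      moreover have "1 * g \<le> \<bar>real i - real i'\<bar> * g"
        using \<open>i \<noteq> i'\<close> g assms by (intro mult_right_mono) auto
      ultimately show ?thesis using g by linarith
    qed
  qed (simp add: P_def)
qed

lemma exists_point_with_many_queries:
  assumes accurate: "\<And>x. x \<in> {0..<w} \<Longrightarrow> \<bar>estimate qf est N x y - x\<bar> \<le> \<epsilon> / 2"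
    and "0 < \<epsilon>" "0 < w"
  obtains x where "x \<in> {0..<w}" "w / \<epsilon> \<le> 2 ^ queries_in qf N y {0<..<w} 0 x"
proof -
  obtain P where P: "finite P" "P \<subseteq> {0..<w}" "w / \<epsilon> \<le> card P"
    and sep: "\<And>x x'. x \<in> P \<Longrightarrow> x' \<in> P \<Longrightarrow> x \<noteq> x' \<Longrightarrow> \<epsilon> < \<bar>x - x'\<bar>"
    using exists_separated_points[OF \<open>0 < \<epsilon>\<close> \<open>0 < w\<close>] by blast
  have kraft: "(\<Sum>x\<in>P. (1/2::real) ^ queries_in qf N y {0<..<w} 0 x) \<le> 1"
  proof (rule kraft_inequality)
    show "\<forall>x\<in>P. \<forall>x'\<in>P. resps qf x y N = resps qf x' y N \<longrightarrow> x = x'"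
    proof (intro ballI impI)
      fix x x' assume "x \<in> P" "x' \<in> P" "resps qf x y N = resps qf x' y N"
      moreover from this have "\<bar>x - x'\<bar> \<le> \<epsilon>"
        using P(2) by (intro dist_le_if_same_resps[of qf x y N x' est \<epsilon>] accurate) auto
      ultimately show "x = x'" using sep by force
    qed
    show "\<forall>a\<in>P. \<forall>b\<in>P. {a<..b} \<subseteq> {0<..<w}"
      using P(2) by fastforce
  qed (use P(1) in simp_all)
  have "0 < w / \<epsilon>" using assms(2,3) by simp
  then have "card P > 0" using P(3) by linarith
  have "\<exists>x\<in>P. (1/2::real) ^ queries_in qf N y {0<..<w} 0 x \<le> 1 / card P"
  proof (rule ccontr)
    assume "\<not> ?thesis"
    then have "(\<Sum>x\<in>P. 1 / real (card P)) < (\<Sum>x\<in>P. (1/2::real) ^ queries_in qf N y {0<..<w} 0 x)"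
      using P(1) \<open>card P > 0\<close> by (intro sum_strict_mono) (auto simp: not_le)
    with kraft \<open>card P > 0\<close> show False by simp
  qed
  then obtain x where "x \<in> P" "(1/2::real) ^ queries_in qf N y {0<..<w} 0 x \<le> 1 / card P" ..
  then have "real (card P) \<le> 2 ^ queries_in qf N y {0<..<w} 0 x"
    using \<open>card P > 0\<close> by (simp add: power_one_over field_simps)
  with P(3) have "w / \<epsilon> \<le> 2 ^ queries_in qf N y {0<..<w} 0 x" by linarith
  with P(2) \<open>x \<in> P\<close> show ?thesis by (intro that[of x]) auto
qed

section \<open>Covers\<close>

lemma coverable_empty: "0 \<le> \<delta> \<Longrightarrow> coverable \<delta> m {}"
  unfolding coverable_def by (intro exI[of _ "\<lambda>_. 0"]) auto

lemma coverable_SucI: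
  assumes "coverable \<delta> m S" "lo \<le> hi" "hi - lo \<le> \<delta>" "T \<subseteq> {lo..hi} \<union> S"
  shows "coverable \<delta> (Suc m) T"
proof -
  obtain a b where "\<forall>i<m. a i \<le> b i \<and> b i - a i \<le> \<delta>" "S \<subseteq> (\<Union>i<m. {a i..b i})"
    using assms(1) unfolding coverable_def by blast
  moreover have "T \<subseteq> (\<Union>i<Suc m. {case_nat lo a i..case_nat hi b i})"
    using assms(4) calculation(2) by (force simp: lessThan_Suc_eq_insert_0)
  ultimately show ?thesis
    unfolding coverable_def using assms(2,3)
    by (intro exI[of _ "case_nat lo a"] exI[of _ "case_nat hi b"]) (auto simp: less_Suc_eq_0_disj)
qed

lemma coverable_by_grid:
  assumes "0 < \<delta>" "E \<subseteq> {0..<1}"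
  shows "coverable \<delta> (nat \<lceil>1 / \<delta>\<rceil>) E"
  unfolding coverable_def
proof (intro exI conjI)
  show "\<forall>i<nat \<lceil>1 / \<delta>\<rceil>. real i * \<delta> \<le> (real i + 1) * \<delta> \<and> (real i + 1) * \<delta> - real i * \<delta> \<le> \<delta>"
    using assms(1) by (simp add: algebra_simps)
  show "E \<subseteq> (\<Union>i<nat \<lceil>1 / \<delta>\<rceil>. {real i * \<delta>..(real i + 1) * \<delta>})"
  proof
    fix x assume "x \<in> E"
    with assms have x: "0 \<le> x / \<delta>" "x / \<delta> < 1 / \<delta>"
      by (auto simp: divide_strict_right_mono)
    define i where "i = nat \<lfloor>x / \<delta>\<rfloor>"
    have "real i \<le> x / \<delta>" "x / \<delta> < real i + 1"
      using x by (auto simp: i_def)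
    then have "real i * \<delta> \<le> x" "x \<le> (real i + 1) * \<delta>"
      using assms(1) by (auto simp: field_simps)
    moreover have "i < nat \<lceil>1 / \<delta>\<rceil>"
      using x unfolding i_def by linarith
    ultimately show "x \<in> (\<Union>i<nat \<lceil>1 / \<delta>\<rceil>. {real i * \<delta>..(real i + 1) * \<delta>})" by auto
  qed
qed

lemma coverable_cover_number:
  "0 < \<delta> \<Longrightarrow> E \<subseteq> {0..<1} \<Longrightarrow> coverable \<delta> (cover_number \<delta> E) E"
  unfolding cover_number_def by (rule LeastI) (rule coverable_by_grid)

lemma cover_number_le: "coverable \<delta> K E \<Longrightarrow> cover_number \<delta> E \<le> K"
  unfolding cover_number_def by (rule Least_le)

lemma separated_points_le_coverable:
  assumes "coverable \<delta> K E" "\<And>p. p < m \<Longrightarrow> z p \<in> E"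
    and "\<And>p p'. p < p' \<Longrightarrow> p' < m \<Longrightarrow> z p + \<delta> < z p'"
  shows "m \<le> K"
proof -
  obtain a b where ab: "\<forall>i<K. a i \<le> b i \<and> b i - a i \<le> \<delta>" "E \<subseteq> (\<Union>i<K. {a i..b i})"
    using assms(1) unfolding coverable_def by blast
  then have "\<forall>p<m. \<exists>i. i < K \<and> z p \<in> {a i..b i}"
    using assms(2) by blast
  then obtain idx where idx: "\<And>p. p < m \<Longrightarrow> idx p < K \<and> z p \<in> {a (idx p)..b (idx p)}"
    by metis
  have "inj_on idx {..<m}"
  proof (rule linorder_inj_onI')
    fix p p' assume "p \<in> {..<m}" "p' \<in> {..<m}" "p < p'"
    with idx[of p] idx[of p'] ab(1) assms(3)[of p p'] show "idx p \<noteq> idx p'" by force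
  qed
  moreover have "idx ` {..<m} \<subseteq> {..<K}" using idx by auto
  ultimately show ?thesis using card_inj_on_le[of idx "{..<m}" "{..<K}"] by simp
qed

lemma separated_points_le_cover_number:
  assumes "0 < \<delta>" "E \<subseteq> {0..<1}" "\<And>p. p < m \<Longrightarrow> z p \<in> E"
    and "\<And>p p'. p < p' \<Longrightarrow> p' < m \<Longrightarrow> z p + \<delta> < z p'"
  shows "m \<le> cover_number \<delta> E"
  using separated_points_le_coverable[OF coverable_cover_number[OF assms(1,2)] assms(3,4)] .

lemma chain_gap_trans:
  fixes z :: "nat \<Rightarrow> real"
  assumes "\<And>i. i < m \<Longrightarrow> z i + d < z (Suc i)" "0 \<le> d" "i < j" "j \<le> m"
  shows "z i + d < z j"
  using assms(3,4)
proof (induction j)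
  case (Suc j)
  with assms(1)[of j] assms(2) show ?case
    by (cases "i = j") auto
qed simp

text \<open>Greedy covering from the left: each interval starts at the infimum of what is left.\<close>

lemma separated_chain_if_not_coverable:
  fixes E :: "real set"
  assumes "bdd_below E" "0 \<le> d" "d < \<delta>"
  shows "\<not> coverable \<delta> m (E \<inter> {c..}) \<Longrightarrow>
    \<exists>z. (\<forall>i\<le>m. z i \<in> E) \<and> c \<le> z 0 \<and> (\<forall>i<m. z i + d < z (Suc i))"
proof (induction m arbitrary: c)
  case 0
  then have "E \<inter> {c..} \<noteq> {}" using coverable_empty assms(2,3) by force
  then obtain z0 where "z0 \<in> E" "c \<le> z0" by auto
  then show ?case by (intro exI[of _ "\<lambda>_. z0"]) auto
next
  case (Suc m)
  define E' where "E' = E \<inter> {c..}"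
  have "E' \<noteq> {}" using Suc.prems coverable_empty assms(2,3) unfolding E'_def by force
  moreover have bdd: "bdd_below E'" using assms(1) unfolding E'_def by (meson bdd_below_mono inf_le1)
  ultimately obtain z0 where z0: "z0 \<in> E'" "z0 < Inf E' + (\<delta> - d)"
    using cInf_less_iff[of E' "Inf E' + (\<delta> - d)"] assms(3) by auto
  have "\<not> coverable \<delta> m (E \<inter> {Inf E' + \<delta>..})"
  proof
    assume "coverable \<delta> m (E \<inter> {Inf E' + \<delta>..})"
    moreover have "E' \<subseteq> {Inf E'..Inf E' + \<delta>} \<union> (E \<inter> {Inf E' + \<delta>..})"
      using cInf_lower[OF _ bdd] unfolding E'_def by force
    ultimately have "coverable \<delta> (Suc m) E'"
      using assms(2,3) by (intro coverable_SucI) auto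
    with Suc.prems show False by (simp add: E'_def)
  qed
  then obtain z where z: "\<forall>i\<le>m. z i \<in> E" "Inf E' + \<delta> \<le> z 0" "\<forall>i<m. z i + d < z (Suc i)"
    using Suc.IH by blast
  have "\<forall>i\<le>Suc m. case_nat z0 z i \<in> E" "\<forall>i<Suc m. case_nat z0 z i + d < case_nat z0 z (Suc i)"
    using z z0 unfolding E'_def by (auto split: nat.split)
  with z0 show ?case unfolding E'_def by (intro exI[of _ "case_nat z0 z"]) auto
qed

lemma card_ge_interleaved_points:
  fixes z :: "nat \<Rightarrow> real" and Q :: "real set"
  assumes "finite Q"
    and gaps: "\<And>i. i < m \<Longrightarrow> z i + 2 * e < z (Suc i)"
    and above: "\<And>i. i < m \<Longrightarrow> \<exists>q\<in>Q. z i < q \<and> q \<le> z i + e"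
    and below: "\<And>i. 1 \<le> i \<Longrightarrow> i \<le> m \<Longrightarrow> \<exists>q\<in>Q. z i - e < q \<and> q \<le> z i"
  shows "2 * m \<le> card Q"
proof -
  obtain U where U: "\<And>i. i < m \<Longrightarrow> U i \<in> Q \<and> z i < U i \<and> U i \<le> z i + e"
    using above by metis
  obtain D where D: "\<And>i. 1 \<le> i \<Longrightarrow> i \<le> m \<Longrightarrow> D i \<in> Q \<and> z i - e < D i \<and> D i \<le> z i"
    using below by metis
  define f where "f j = (if even j then U (j div 2) else D (Suc (j div 2)))" for j
  have step: "f j + 0 < f (Suc j)" if "Suc j < 2 * m" for j
  proof (cases "even j")
    case True
    with that U[of "j div 2"] D[of "Suc (j div 2)"] gaps[of "j div 2"] show ?thesis
      by (auto simp: f_def)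
  next
    case False
    with that have "Suc (j div 2) < m" by presburger
    with False U[of "Suc (j div 2)"] D[of "Suc (j div 2)"] show ?thesis
      by (auto simp: f_def)
  qed
  have "inj_on f {..<2 * m}"
  proof (rule linorder_inj_onI')
    fix i j assume "i \<in> {..<2 * m}" "j \<in> {..<2 * m}" "i < j"
    then have "f i + 0 < f j"
      by (intro chain_gap_trans[of "2 * m - 1" f 0 i j]) (use step in auto)
    then show "f i \<noteq> f j" by simp
  qed
  moreover have "f ` {..<2 * m} \<subseteq> Q"
    using U D by (auto simp: f_def)
  ultimately show ?thesis
    using card_inj_on_le[OF _ _ \<open>finite Q\<close>] by fastforce
qed

section \<open>Lower bounds\<close>

lemma separated_chain_above:
  assumes "L \<le> cover_number \<delta> E" "E \<subseteq> {0..<1}" "2 \<le> L" "0 \<le> d" "d < \<delta>"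
  obtains z where "\<forall>i\<le>L - 2. z i \<in> E" "\<delta> \<le> z 0" "\<forall>i<L - 2. z i + d < z (Suc i)"
proof -
  have "\<not> coverable \<delta> (L - 2) (E \<inter> {\<delta>..})"
  proof
    assume "coverable \<delta> (L - 2) (E \<inter> {\<delta>..})"
    then have "coverable \<delta> (Suc (L - 2)) E"
      using assms(2,4,5) by (intro coverable_SucI[of _ _ _ 0 \<delta>]) auto
    then have "cover_number \<delta> E \<le> Suc (L - 2)" by (rule cover_number_le)
    with assms(1,3) show False by linarith
  qed
  moreover have "bdd_below E" using assms(2) by (intro bdd_belowI[of _ 0]) auto
  ultimately show ?thesis
    using separated_chain_if_not_coverable[of E d \<delta> "L - 2" \<delta>] assms(4,5) that by blast
qed

lemma separating_query_from_info_set: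
  assumes priv: "is_private \<epsilon> \<delta> L N Yc qf est"
    and "z \<in> info_set qf N Yc qs" "x' \<in> {0..<1}" "\<epsilon> < \<bar>z - x'\<bar>"
  shows "\<exists>q\<in>set qs. min z x' < q \<and> q \<le> max z x'"
proof -
  obtain y where y: "y \<in> {1..Yc}" and qs: "queries qf N z y = qs" and "z \<in> {0..<1}"
    using assms(2) by (auto simp: info_set_def Qset_def)
  then have "\<bar>estimate qf est N z y - z\<bar> \<le> \<epsilon> / 2" "\<bar>estimate qf est N x' y - x'\<bar> \<le> \<epsilon> / 2"
    using priv assms(3) by (simp_all add: is_private_def)
  with qs assms(4) show ?thesis using exists_separating_query by blast
qed

lemma card_queries_above_if_private:
  assumes priv: "is_private \<epsilon> \<delta> L N Yc qf est" and "0 < \<epsilon>" "2 * \<epsilon> < \<delta>" "2 \<le> L"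
    and "x \<in> {0..<1}" "y \<in> {1..Yc}"
  shows "2 * L - 4 \<le> card {k. k < N \<and> \<delta> < queries qf N x y ! k}"
proof -
  define qs where "qs = queries qf N x y"
  define E where "E = info_set qf N Yc qs"
  define e where "e = (\<epsilon> + \<delta> / 2) / 2"
  have e: "\<epsilon> < e" "2 * e < \<delta>" using assms(2,3) by (auto simp: e_def)
  have E01: "E \<subseteq> {0..<1}" by (auto simp: E_def info_set_def)
  moreover have "L \<le> cover_number \<delta> E"
    using priv assms(5,6) unfolding is_private_def Qset_def E_def qs_def by blast
  ultimately obtain z where z: "\<forall>i\<le>L - 2. z i \<in> E" "\<delta> \<le> z 0"
    and gaps: "\<forall>i<L - 2. z i + 2 * e < z (Suc i)"
    using separated_chain_above[of L \<delta> E "2 * e"] assms(2,4) e by auto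
  have z_ge: "z 0 + 2 * e < z i" if "0 < i" "i \<le> L - 2" for i
    by (rule chain_gap_trans[of "L - 2" z "2 * e" 0 i]) (use gaps e assms(2) that in auto)
  have z_in: "z i \<in> {0..<1}" if "i \<le> L - 2" for i
    using z(1) E01 that by blast
  have near: "\<exists>q\<in>set qs. min (z i) x' < q \<and> q \<le> max (z i) x'"
    if "i \<le> L - 2" "x' \<in> {0..<1}" "\<bar>z i - x'\<bar> = e" for i x'
    using separating_query_from_info_set[OF priv, of "z i"] z(1) that e(1) by (simp add: E_def)
  define Q where "Q = {q \<in> set qs. \<delta> < q}"
  have "2 * (L - 2) \<le> card Q"
  proof (rule card_ge_interleaved_points[of Q "L - 2" z e])
    show "\<exists>q\<in>Q. z i < q \<and> q \<le> z i + e" if i: "i < L - 2" for i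
    proof -
      have "\<delta> \<le> z i"
        using z(2) z_ge[of i] e assms(2) i by (cases "i = 0") auto
      moreover have "z i + e \<in> {0..<1}"
        using z_in[of i] z_in[of "Suc i"] gaps e assms(2) i by auto
      ultimately show ?thesis
        using near[of i "z i + e"] e assms(2) i by (force simp: Q_def)
    qed
    show "\<exists>q\<in>Q. z i - e < q \<and> q \<le> z i" if i: "1 \<le> i" "i \<le> L - 2" for i
    proof -
      have "\<delta> + e < z i" using z(2) z_ge[of i] e assms(2) i by auto
      moreover have "z i - e \<in> {0..<1}"
        using calculation z_in[of i] e assms(2) i by auto
      ultimately show ?thesis
        using near[of i "z i - e"] e assms(2) i by (force simp: Q_def)
    qed
  qed (use gaps in \<open>auto simp: Q_def\<close>)
  also have "card Q \<le> card ((!) qs ` {k. k < N \<and> \<delta> < qs ! k})"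
    by (rule card_mono) (auto simp: Q_def qs_def in_set_conv_nth)
  also have "\<dots> \<le> card {k. k < N \<and> \<delta> < qs ! k}"
    by (rule card_image_le) simp
  finally show ?thesis by (simp add: qs_def)
qed

lemma ceiling_log2_le:
  assumes "0 < a" "a \<le> 2 ^ c"
  shows "\<lceil>log 2 a\<rceil> \<le> int c"
proof -
  have "log 2 a \<le> log 2 (2 ^ c)" using assms by (subst log_le_cancel_iff) auto
  also have "\<dots> = real c" by (simp add: log_pow_cancel)
  finally show ?thesis by (simp add: ceiling_le_iff)
qed

lemma private_lower_bounds:
  assumes priv: "is_private \<epsilon> \<delta> L N Yc qf est" and "0 < \<epsilon>" "2 * \<epsilon> < \<delta>" "2 \<le> L" "\<delta> \<le> 1"
  shows "\<lceil>log 2 (1 / \<epsilon>)\<rceil> \<le> int N" "\<lceil>log 2 (\<delta> / \<epsilon>)\<rceil> + 2 * int L - 4 \<le> int N"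
proof -
  have "(1::nat) \<in> {1..Yc}" using priv by (simp add: is_private_def is_strategy_def)
  then have accurate: "\<And>x. x \<in> {0..<1} \<Longrightarrow> \<bar>estimate qf est N x 1 - x\<bar> \<le> \<epsilon> / 2"
    using priv by (simp add: is_private_def)
  obtain x1 where "1 / \<epsilon> \<le> 2 ^ queries_in qf N 1 {0<..<1} 0 x1"
    using exists_point_with_many_queries[of 1 qf est N 1 \<epsilon>] accurate \<open>0 < \<epsilon>\<close> by auto
  also have "(2::real) ^ queries_in qf N 1 {0<..<1} 0 x1 \<le> 2 ^ N"
    by (intro power_increasing queries_in_le) auto
  finally show "\<lceil>log 2 (1 / \<epsilon>)\<rceil> \<le> int N"
    using \<open>0 < \<epsilon>\<close> by (intro ceiling_log2_le) auto
  obtain x where x: "x \<in> {0..<\<delta>}" "\<delta> / \<epsilon> \<le> 2 ^ queries_in qf N 1 {0<..<\<delta>} 0 x"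
    using exists_point_with_many_queries[of \<delta> qf est N 1 \<epsilon>] accurate assms(2,3,5) by auto
  define below where "below = {k \<in> {0..<N}. queries qf N x 1 ! k \<in> {0<..<\<delta>}}"
  define above where "above = {k. k < N \<and> \<delta> < queries qf N x 1 ! k}"
  have "queries_in qf N 1 {0<..<\<delta>} 0 x = card below"
    by (simp add: queries_in_def below_def nth_queries cong: conj_cong)
  with x assms(2,3) have "\<lceil>log 2 (\<delta> / \<epsilon>)\<rceil> \<le> int (card below)"
    by (intro ceiling_log2_le) auto
  moreover have "2 * L - 4 \<le> card above"
    using card_queries_above_if_private[OF priv assms(2-4)] x assms(5) \<open>1 \<in> {1..Yc}\<close>
    by (auto simp: above_def)
  moreover have "card below + card above \<le> N"
  proof -
    have "card below + card above = card (below \<union> above)"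
      by (rule card_Un_disjoint[symmetric]) (auto simp: below_def above_def)
    also have "\<dots> \<le> card {..<N}" by (rule card_mono) (auto simp: below_def above_def)
    finally show ?thesis by simp
  qed
  ultimately show "\<lceil>log 2 (\<delta> / \<epsilon>)\<rceil> + 2 * int L - 4 \<le> int N"
    using \<open>2 \<le> L\<close> by linarith
qed

section \<open>Binary search arithmetic\<close>

definition bits_value :: "bool list \<Rightarrow> nat" where
  "bits_value bs = foldl (\<lambda>v b. 2 * v + of_bool b) 0 bs"

lemma bits_value_snoc [simp]: "bits_value (bs @ [b]) = 2 * bits_value bs + of_bool b"
  by (simp add: bits_value_def)

lemma bits_value_less: "bits_value bs < 2 ^ length bs"
  by (induction bs rule: rev_induct) (auto simp: bits_value_def)

lemma div_two_power_eq: "(u::nat) div 2 ^ p = 2 * (u div 2 ^ Suc p) + of_bool (bit u p)"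
proof -
  have "u div 2 ^ Suc p = u div 2 ^ p div 2" by (metis div_mult2_eq power_Suc2)
  then show ?thesis by (simp add: bit_nat_def)
qed

lemma bits_value_high_bits:
  "t \<le> n \<Longrightarrow> u < 2 ^ n \<Longrightarrow> bits_value (map (\<lambda>i. bit u (n - Suc i)) [0..<t]) = u div 2 ^ (n - t)"
proof (induction t)
  case 0
  then show ?case by (simp add: bits_value_def)
next
  case (Suc t)
  then have "n - t = Suc (n - Suc t)" by simp
  with Suc show ?case using div_two_power_eq[of u "n - Suc t"] by simp
qed

lemma mult_le_plus_less_iff:
  fixes a c r d :: nat
  assumes "r < d"
  shows "(c * d \<le> a * d + r) = (c \<le> a)"
proof
  assume "c * d \<le> a * d + r"
  then have "c * d < Suc a * d" using assms by simp
  then show "c \<le> a" by (simp only: mult_less_cancel2) simp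
next
  assume "c \<le> a"
  then show "c * d \<le> a * d + r" by (simp add: trans_le_add1)
qed

definition search_offset :: "nat \<Rightarrow> nat \<Rightarrow> nat \<Rightarrow> nat" where
  "search_offset n v t = (2 * v + 1) * 2 ^ (n - Suc t)"

lemma search_offset_le_iff:
  assumes "t < n"
  shows "(search_offset n (u div 2 ^ (n - t)) t \<le> u) = bit u (n - Suc t)"
proof -
  define p where "p = n - Suc t"
  define a where "a = u div 2 ^ p"
  have "n - t = Suc p" using assms by (simp add: p_def)
  then have "u div 2 ^ (n - t) = a div 2" by (metis a_def div_mult2_eq power_Suc2)
  moreover have "u = a * 2 ^ p + u mod 2 ^ p" using div_mult_mod_eq[of u "2 ^ p"] by (simp add: a_def)
  moreover have "u mod 2 ^ p < 2 ^ p" by simp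
  ultimately have "(search_offset n (u div 2 ^ (n - t)) t \<le> u) = (2 * (a div 2) + 1 \<le> a)"
    unfolding search_offset_def p_def[symmetric] by (metis mult_le_plus_less_iff)
  also have "\<dots> = odd a" by presburger
  finally show ?thesis by (simp add: bit_nat_def a_def p_def)
qed

lemma search_offset_less: "t < n \<Longrightarrow> v < 2 ^ t \<Longrightarrow> search_offset n v t < 2 ^ n"
proof -
  assume "t < n" "v < 2 ^ t"
  then have "(2 * v + 1) * 2 ^ (n - Suc t) < 2 ^ Suc t * 2 ^ (n - Suc t)"
    by (intro mult_strict_right_mono) auto
  also have "\<dots> = 2 ^ (Suc t + (n - Suc t))" by (simp only: power_add)
  also have "\<dots> = 2 ^ n" using \<open>t < n\<close> by simp
  finally show ?thesis by (simp add: search_offset_def)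
qed

lemma search_offset_pos: "0 < search_offset n v t"
  by (simp add: search_offset_def)

lemma odd_times_power_two_le_exp:
  fixes a b p q :: nat
  assumes "(2 * a + 1) * 2 ^ p = (2 * b + 1) * 2 ^ q"
  shows "p \<le> q"
proof (rule ccontr)
  assume "\<not> p \<le> q"
  then have "(2::nat) ^ p = 2 ^ (p - q) * 2 ^ q" by (simp flip: power_add)
  then have "(2 * b + 1) * 2 ^ q = ((2 * a + 1) * 2 ^ (p - q)) * 2 ^ q"
    using assms by (simp only: mult.assoc)
  then have "2 * b + 1 = (2 * a + 1) * 2 ^ (p - q)" by (subst (asm) mult_cancel_right) simp
  moreover have "even ((2 * a + 1) * 2 ^ (p - q))" using \<open>\<not> p \<le> q\<close> by simp
  ultimately have "even (2 * b + 1)" by metis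
  then show False by simp
qed

lemma search_offset_eq_imp_step_eq:
  assumes "search_offset n v t = search_offset n v' t'" "t < n" "t' < n"
  shows "t = t'"
proof -
  have "n - Suc t = n - Suc t'"
    using assms(1) odd_times_power_two_le_exp[of v _ v'] odd_times_power_two_le_exp[of v' _ v]
    by (simp add: search_offset_def) (metis le_antisym)
  with assms(2,3) show ?thesis by simp
qed

section \<open>A private block-search strategy\<close>

text \<open>The strategy with parameters L and n works on the grid of cells of width
  \<open>grid_step L n\<close>; cell \<open>a 2^n + u\<close> is cell u of block a. Queries 0 to L - 1 probe the block starts,
  queries L to 2 L - 1 the ends of the first cells, so that the responses determine the block
  (\<open>decoded_block\<close>) and whether x lies in its first cell (\<open>in_first_cell\<close>). Query 2 L + t is step t
  of a binary search for the offset u: its first t bits are read off the previous responses,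
  or, for x in a first cell, taken from the seed, which encodes the pair (block, offset)
  as \<open>y = a 2^n + u + 1\<close>.\<close>

definition grid_step :: "nat \<Rightarrow> nat \<Rightarrow> real" where
  "grid_step L n = 1 / (real L * 2 ^ n)"

definition cell :: "nat \<Rightarrow> nat \<Rightarrow> real \<Rightarrow> nat" where
  "cell L n x = nat \<lfloor>x * (real L * 2 ^ n)\<rfloor>"

definition probe_cell :: "nat \<Rightarrow> nat \<Rightarrow> nat \<Rightarrow> nat" where
  "probe_cell L n k = (if k < L then k * 2 ^ n else (k - L) * 2 ^ n + 1)"

text \<open>A search query at offset 1 would coincide with the probe that ends the first cell; at offset
  1/2 it still gets the right answer in a genuine search, where x lies beyond the first cell.\<close>

definition nudge :: "nat \<Rightarrow> real" where
  "nudge m = (if m = 1 then 1 / 2 else real m)"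

definition search_query :: "nat \<Rightarrow> nat \<Rightarrow> nat \<Rightarrow> nat \<Rightarrow> nat \<Rightarrow> real" where
  "search_query L n a v t = (real (a * 2 ^ n) + nudge (search_offset n v t)) * grid_step L n"

definition decoded_block :: "nat \<Rightarrow> bool list \<Rightarrow> nat" where
  "decoded_block L rs = card {k \<in> {1..<L}. rs ! k}"

definition in_first_cell :: "nat \<Rightarrow> bool list \<Rightarrow> bool" where
  "in_first_cell L rs \<longleftrightarrow> \<not> rs ! (L + decoded_block L rs)"

definition search_bits :: "nat \<Rightarrow> bool list \<Rightarrow> nat \<Rightarrow> bool list" where
  "search_bits L rs t = take t (drop (2 * L) rs)"

definition seed_block :: "nat \<Rightarrow> nat \<Rightarrow> nat" where
  "seed_block n y = (y - 1) div 2 ^ n"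

definition seed_offset :: "nat \<Rightarrow> nat \<Rightarrow> nat" where
  "seed_offset n y = (y - 1) mod 2 ^ n"

definition private_query :: "nat \<Rightarrow> nat \<Rightarrow> query_fun" where
  "private_query L n k rs y =
    (if k < 2 * L then real (probe_cell L n k) * grid_step L n
     else if in_first_cell L rs
     then search_query L n (seed_block n y) (seed_offset n y div 2 ^ (n - (k - 2 * L))) (k - 2 * L)
     else search_query L n (decoded_block L rs) (bits_value (search_bits L rs (k - 2 * L))) (k - 2 * L))"

definition private_estimate :: "nat \<Rightarrow> nat \<Rightarrow> est_fun" where
  "private_estimate L n rs y = (real (decoded_block L rs * 2 ^ n
     + (if in_first_cell L rs then 0 else bits_value (search_bits L rs n))) + 1 / 2) * grid_step L n"

definition query_path :: "nat \<Rightarrow> nat \<Rightarrow> nat \<Rightarrow> nat \<Rightarrow> real list" where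
  "query_path L n a b = map (\<lambda>k. real (probe_cell L n k) * grid_step L n) [0..<2 * L]
     @ map (\<lambda>t. search_query L n a (b div 2 ^ (n - t)) t) [0..<n]"

lemma grid_step_pos: "1 \<le> L \<Longrightarrow> 0 < grid_step L n"
  by (simp add: grid_step_def)

context
  fixes L n :: nat and x :: real
  assumes L: "1 \<le> L" and x: "0 \<le> x" "x < 1"
begin

lemma cell_bounds: "real (cell L n x) * grid_step L n \<le> x" "x < real (cell L n x + 1) * grid_step L n"
proof -
  have H: "0 < real L * 2 ^ n" using L by simp
  then have "real (cell L n x) = of_int \<lfloor>x * (real L * 2 ^ n)\<rfloor>"
    using x by (simp add: cell_def)
  then have "real (cell L n x) \<le> x * (real L * 2 ^ n)" "x * (real L * 2 ^ n) < real (cell L n x) + 1"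
    by linarith+
  with H show "real (cell L n x) * grid_step L n \<le> x" "x < real (cell L n x + 1) * grid_step L n"
    by (simp_all add: grid_step_def field_simps)
qed

lemma le_cell_iff: "(real m * grid_step L n \<le> x) = (m \<le> cell L n x)"
proof
  assume "real m * grid_step L n \<le> x"
  with cell_bounds(2) have "real m * grid_step L n < real (cell L n x + 1) * grid_step L n" by linarith
  then have "real m < real (cell L n x + 1)"
    using grid_step_pos[OF L] mult_less_cancel_right_pos by blast
  then show "m \<le> cell L n x" by simp
next
  assume "m \<le> cell L n x"
  then have "real m * grid_step L n \<le> real (cell L n x) * grid_step L n"
    using grid_step_pos[OF L] by (simp add: mult_right_mono)
  with cell_bounds(1) show "real m * grid_step L n \<le> x" by linarith
qed

lemma cell_less: "cell L n x < L * 2 ^ n"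
proof -
  have "\<not> L * 2 ^ n \<le> cell L n x"
    using le_cell_iff[of "L * 2 ^ n"] x L by (simp add: grid_step_def)
  then show ?thesis by simp
qed

lemma block_less: "cell L n x div 2 ^ n < L"
  using cell_less by (simp add: div_less_iff_less_mult)

lemma resps_probe:
  "k < K \<Longrightarrow> k < 2 * L \<Longrightarrow> resps (private_query L n) x y K ! k = (probe_cell L n k \<le> cell L n x)"
  by (simp add: nth_resps private_query_def le_cell_iff)

lemma decoded_block_resps:
  assumes "2 * L \<le> K"
  shows "decoded_block L (resps (private_query L n) x y K) = cell L n x div 2 ^ n"
proof -
  have "(k * 2 ^ n \<le> cell L n x) = (k \<le> cell L n x div 2 ^ n)" for k
    by (simp add: less_eq_div_iff_mult_less_eq)
  then have "{k \<in> {1..<L}. resps (private_query L n) x y K ! k} = {1..cell L n x div 2 ^ n}"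
    using assms block_less by (auto simp: resps_probe probe_cell_def)
  then show ?thesis by (simp add: decoded_block_def)
qed

lemma in_first_cell_resps:
  assumes "2 * L \<le> K"
  shows "in_first_cell L (resps (private_query L n) x y K) = (cell L n x mod 2 ^ n = 0)"
proof -
  define j where "j = cell L n x div 2 ^ n"
  have "cell L n x = j * 2 ^ n + cell L n x mod 2 ^ n"
    using div_mult_mod_eq[of "cell L n x" "2 ^ n"] by (simp add: j_def)
  then have "(j * 2 ^ n + 1 \<le> cell L n x) = (cell L n x mod 2 ^ n \<noteq> 0)" by linarith
  then show ?thesis
    using assms block_less
    by (simp add: in_first_cell_def decoded_block_resps resps_probe probe_cell_def flip: j_def)
qed

lemma search_query_le_iff:
  assumes "cell L n x mod 2 ^ n \<noteq> 0" "t < n"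
  shows "(search_query L n (cell L n x div 2 ^ n) (cell L n x mod 2 ^ n div 2 ^ (n - t)) t \<le> x)
    = bit (cell L n x mod 2 ^ n) (n - Suc t)"
proof -
  define j where "j = cell L n x div 2 ^ n"
  define u where "u = cell L n x mod 2 ^ n"
  define m where "m = search_offset n (u div 2 ^ (n - t)) t"
  have cell: "cell L n x = j * 2 ^ n + u"
    using div_mult_mod_eq[of "cell L n x" "2 ^ n"] by (simp add: j_def u_def)
  have "u \<noteq> 0" using assms(1) by (simp add: u_def)
  have "((real (j * 2 ^ n) + nudge m) * grid_step L n \<le> x) = (m \<le> u)"
  proof (cases "m = 1")
    case True
    have "(real (j * 2 ^ n) + 1 / 2) * grid_step L n \<le> real (j * 2 ^ n + 1) * grid_step L n"
      using grid_step_pos[OF L, of n] by (intro mult_right_mono) auto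
    also have "\<dots> \<le> x"
      using le_cell_iff[of "j * 2 ^ n + 1"] \<open>u \<noteq> 0\<close> by (simp add: cell)
    finally show ?thesis
      using True \<open>u \<noteq> 0\<close> by (simp add: nudge_def)
  next
    case False
    then have "nudge m = real m" by (simp add: nudge_def)
    then show ?thesis using le_cell_iff[of "j * 2 ^ n + m"] by (simp add: cell)
  qed
  moreover have "(m \<le> u) = bit u (n - Suc t)"
    unfolding m_def using assms(2) by (rule search_offset_le_iff)
  ultimately show ?thesis
    by (simp add: search_query_def m_def j_def u_def)
qed

lemma search_bits_resps:
  assumes "cell L n x mod 2 ^ n \<noteq> 0"
  shows "t \<le> n \<Longrightarrow> 2 * L + t \<le> K \<Longrightarrow> search_bits L (resps (private_query L n) x y K) t
    = map (\<lambda>i. bit (cell L n x mod 2 ^ n) (n - Suc i)) [0..<t]"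
proof (induction t arbitrary: K)
  case 0
  then show ?case by (simp add: search_bits_def)
next
  case (Suc t)
  let ?rs = "resps (private_query L n) x y" and ?u = "cell L n x mod 2 ^ n"
  have split: "search_bits L (?rs K) (Suc t) = search_bits L (?rs K) t @ [?rs K ! (2 * L + t)]"
    using Suc.prems by (simp add: search_bits_def take_Suc_conv_app_nth)
  have "bits_value (search_bits L (?rs (2 * L + t)) t) = ?u div 2 ^ (n - t)"
    using Suc.IH[of "2 * L + t"] Suc.prems by (simp add: bits_value_high_bits)
  then have "private_query L n (2 * L + t) (?rs (2 * L + t)) y
      = search_query L n (cell L n x div 2 ^ n) (?u div 2 ^ (n - t)) t"
    using assms by (simp add: private_query_def in_first_cell_resps decoded_block_resps)
  then have "?rs K ! (2 * L + t) = bit ?u (n - Suc t)"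
    using Suc.prems assms by (simp add: nth_resps search_query_le_iff)
  with Suc split show ?case by simp
qed

lemma private_query_search:
  assumes "t < n"
  shows "private_query L n (2 * L + t) (resps (private_query L n) x y (2 * L + t)) y =
    (if cell L n x mod 2 ^ n = 0
     then search_query L n (seed_block n y) (seed_offset n y div 2 ^ (n - t)) t
     else search_query L n (cell L n x div 2 ^ n) (cell L n x mod 2 ^ n div 2 ^ (n - t)) t)"
  using assms search_bits_resps[of t "2 * L + t" y]
  by (simp add: private_query_def in_first_cell_resps decoded_block_resps bits_value_high_bits)

lemma queries_private_query:
  "queries (private_query L n) (2 * L + n) x y =
    (if cell L n x mod 2 ^ n = 0 then query_path L n (seed_block n y) (seed_offset n y)
     else query_path L n (cell L n x div 2 ^ n) (cell L n x mod 2 ^ n))"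
proof -
  let ?q = "\<lambda>k. private_query L n k (resps (private_query L n) x y k) y"
  have "[0..<2 * L + n] = [0..<2 * L] @ [2 * L..<2 * L + n]"
    by (rule upt_add_eq_append) simp
  also have "[2 * L..<2 * L + n] = map (\<lambda>t. 2 * L + t) [0..<n]"
    by (induction n) auto
  finally have "queries (private_query L n) (2 * L + n) x y = map ?q [0..<2 * L] @ map (\<lambda>t. ?q (2 * L + t)) [0..<n]"
    by (simp add: queries_def)
  moreover have "map ?q [0..<2 * L] = map (\<lambda>k. real (probe_cell L n k) * grid_step L n) [0..<2 * L]"
    by (rule map_cong) (simp_all add: private_query_def)
  moreover have "map (\<lambda>t. ?q (2 * L + t)) [0..<n] =
      map (\<lambda>t. if cell L n x mod 2 ^ n = 0
        then search_query L n (seed_block n y) (seed_offset n y div 2 ^ (n - t)) t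
        else search_query L n (cell L n x div 2 ^ n) (cell L n x mod 2 ^ n div 2 ^ (n - t)) t) [0..<n]"
    by (rule map_cong) (simp_all only: private_query_search atLeastLessThan_iff set_upt)
  ultimately show ?thesis by (simp add: query_path_def)
qed

lemma estimate_private_query:
  "estimate (private_query L n) (private_estimate L n) (2 * L + n) x y = (real (cell L n x) + 1 / 2) * grid_step L n"
proof -
  let ?rs = "resps (private_query L n) x y (2 * L + n)"
  have "decoded_block L ?rs * 2 ^ n + (if in_first_cell L ?rs then 0 else bits_value (search_bits L ?rs n))
      = cell L n x div 2 ^ n * 2 ^ n + cell L n x mod 2 ^ n"
    using search_bits_resps[of n "2 * L + n" y]
    by (simp add: decoded_block_resps in_first_cell_resps bits_value_high_bits)
  also have "\<dots> = cell L n x" by (rule div_mult_mod_eq)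
  finally show ?thesis by (simp add: estimate_def private_estimate_def)
qed

end

lemma private_estimate_accurate:
  assumes "1 \<le> L" "x \<in> {0..<1}"
  shows "\<bar>estimate (private_query L n) (private_estimate L n) (2 * L + n) x y - x\<bar> \<le> grid_step L n / 2"
proof -
  have "estimate (private_query L n) (private_estimate L n) (2 * L + n) x y
      = (real (cell L n x) + 1 / 2) * grid_step L n"
    using assms by (intro estimate_private_query) auto
  with cell_bounds[of L x n] assms show ?thesis
    by (intro abs_leI) (simp_all add: algebra_simps)
qed

lemma scaled_grid_step_range:
  assumes "0 \<le> r" "r < real L * 2 ^ n"
  shows "r * grid_step L n \<in> {0..<1}"
proof -
  have "0 < real L * 2 ^ n" using assms by linarith
  with assms show ?thesis by (simp add: grid_step_def)
qed

lemma div_power_two_less: "(b::nat) < 2 ^ n \<Longrightarrow> t \<le> n \<Longrightarrow> b div 2 ^ (n - t) < 2 ^ t"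
  by (simp add: div_less_iff_less_mult flip: power_add)

lemma probe_cell_less:
  assumes "1 \<le> n" "k < 2 * L"
  shows "probe_cell L n k < L * 2 ^ n"
proof (cases "k < L")
  case False
  define j where "j = k - L"
  have "(2::nat) \<le> 2 ^ n" using assms(1) by (simp add: power_increasing[of 1 n "2::nat", simplified])
  then have "j * 2 ^ n + 1 < (j + 1) * 2 ^ n" by simp
  also have "\<dots> \<le> L * 2 ^ n"
    using assms(2) False by (intro mult_right_mono) (auto simp: j_def)
  finally show ?thesis by (simp add: probe_cell_def False j_def)
qed (simp add: probe_cell_def)

lemma search_cell_bounds:
  assumes "a < L" "v < 2 ^ t" "t < n"
  shows "0 \<le> real (a * 2 ^ n) + nudge (search_offset n v t)"
    "real (a * 2 ^ n) + nudge (search_offset n v t) < real L * 2 ^ n"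
proof -
  have "nudge (search_offset n v t) \<le> real (search_offset n v t)"
    using search_offset_pos[of n v t] by (simp add: nudge_def)
  moreover have "a * 2 ^ n + search_offset n v t < (a + 1) * 2 ^ n"
    using search_offset_less[OF assms(3,2)] by simp
  moreover have "(a + 1) * 2 ^ n \<le> L * 2 ^ n"
    using assms(1) by (intro mult_right_mono) auto
  ultimately have "a * 2 ^ n + search_offset n v t < L * 2 ^ n" by linarith
  then have "real (a * 2 ^ n + search_offset n v t) < real (L * 2 ^ n)" by (simp only: of_nat_less_iff)
  with \<open>nudge (search_offset n v t) \<le> real (search_offset n v t)\<close>
  show "real (a * 2 ^ n) + nudge (search_offset n v t) < real L * 2 ^ n" by simp
  show "0 \<le> real (a * 2 ^ n) + nudge (search_offset n v t)"
    by (simp add: nudge_def)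
qed

lemma search_query_range: "a < L \<Longrightarrow> v < 2 ^ t \<Longrightarrow> t < n \<Longrightarrow> search_query L n a v t \<in> {0..<1}"
  unfolding search_query_def by (intro scaled_grid_step_range search_cell_bounds)

lemma decoded_block_less: "1 \<le> L \<Longrightarrow> decoded_block L rs < L"
proof -
  assume "1 \<le> L"
  have "decoded_block L rs \<le> card {1..<L}" unfolding decoded_block_def by (rule card_mono) auto
  with \<open>1 \<le> L\<close> show ?thesis by simp
qed

lemma seed_block_less: "y \<in> {1..L * 2 ^ n} \<Longrightarrow> seed_block n y < L"
  by (auto simp: seed_block_def div_less_iff_less_mult)

lemma bits_value_search_bits_less: "bits_value (search_bits L rs t) < 2 ^ t"
proof -
  have "length (search_bits L rs t) \<le> t" by (simp add: search_bits_def)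
  then have "(2::nat) ^ length (search_bits L rs t) \<le> 2 ^ t" by (rule power_increasing) simp
  with bits_value_less show ?thesis by (rule order_less_le_trans)
qed

lemma private_query_range:
  assumes "1 \<le> L" "1 \<le> n" "k < 2 * L + n" "y \<in> {1..L * 2 ^ n}"
  shows "private_query L n k rs y \<in> {0..<1}"
proof (cases "k < 2 * L")
  case True
  have "real (probe_cell L n k) < real (L * 2 ^ n)"
    using probe_cell_less[OF assms(2) True] by (simp only: of_nat_less_iff)
  then have "real (probe_cell L n k) * grid_step L n \<in> {0..<1}"
    by (intro scaled_grid_step_range) auto
  with True show ?thesis by (simp add: private_query_def)
next
  case False
  then have t: "k - 2 * L < n" using assms(3) by simp
  have "seed_offset n y div 2 ^ (n - (k - 2 * L)) < 2 ^ (k - 2 * L)"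
    using t by (intro div_power_two_less) (simp_all add: seed_offset_def)
  then have "search_query L n (seed_block n y) (seed_offset n y div 2 ^ (n - (k - 2 * L))) (k - 2 * L) \<in> {0..<1}"
    using t assms(4) by (intro search_query_range seed_block_less)
  moreover have "search_query L n (decoded_block L rs) (bits_value (search_bits L rs (k - 2 * L))) (k - 2 * L) \<in> {0..<1}"
    using t assms(1) by (intro search_query_range decoded_block_less bits_value_search_bits_less)
  ultimately show ?thesis using False by (simp add: private_query_def)
qed

lemma private_estimate_range:
  assumes "1 \<le> L"
  shows "private_estimate L n rs y \<in> {0..<1}"
proof -
  define c where "c = decoded_block L rs * 2 ^ n
    + (if in_first_cell L rs then 0 else bits_value (search_bits L rs n))"
  have "c < (decoded_block L rs + 1) * 2 ^ n"
    using bits_value_search_bits_less[of L rs n] by (simp add: c_def)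
  also have "\<dots> \<le> L * 2 ^ n"
    using decoded_block_less[OF assms, of rs] by (intro mult_right_mono) auto
  finally have "real (c + 1) \<le> real (L * 2 ^ n)" by (simp only: of_nat_le_iff Suc_eq_plus1[symmetric] Suc_le_eq)
  then have "real c + 1 \<le> real L * 2 ^ n" by simp
  then show ?thesis
    unfolding private_estimate_def c_def[symmetric] by (intro scaled_grid_step_range) auto
qed

lemma probe_cell_mod: "1 \<le> n \<Longrightarrow> probe_cell L n k mod 2 ^ n = of_bool (L \<le> k)"
proof -
  assume "1 \<le> n"
  have "((k - L) * 2 ^ n + 1) mod 2 ^ n = 1 mod 2 ^ n" by (rule mod_mult_self3)
  also have "\<dots> = 1" using \<open>1 \<le> n\<close> by simp
  finally show ?thesis by (simp add: probe_cell_def)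
qed

lemma probe_cell_div: "1 \<le> n \<Longrightarrow> probe_cell L n k div 2 ^ n = (if k < L then k else k - L)"
proof -
  assume "1 \<le> n"
  then have "(2::nat) \<le> 2 ^ n" by (simp add: power_increasing[of 1 n "2::nat", simplified])
  have "((k - L) * 2 ^ n + 1) div 2 ^ n = k - L + 1 div 2 ^ n" by (rule div_mult_self3) simp
  also have "\<dots> = k - L" using \<open>2 \<le> 2 ^ n\<close> by simp
  finally show ?thesis by (simp add: probe_cell_def)
qed

lemma inj_on_probe_cell:
  assumes "1 \<le> n"
  shows "inj_on (probe_cell L n) {..<2 * L}"
proof (rule inj_onI)
  fix k k' assume k: "k \<in> {..<2 * L}" "k' \<in> {..<2 * L}" and eq: "probe_cell L n k = probe_cell L n k'"
  have "(of_bool (L \<le> k) :: nat) = of_bool (L \<le> k')"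
    using probe_cell_mod[OF assms, of L k] probe_cell_mod[OF assms, of L k'] eq by simp
  then have "(k < L) = (k' < L)" by auto
  moreover have "(if k < L then k else k - L) = (if k' < L then k' else k' - L)"
    using probe_cell_div[OF assms, of L k] probe_cell_div[OF assms, of L k'] eq by simp
  ultimately show "k = k'" using k by (auto split: if_splits)
qed

lemma nudge_inj: "0 < m \<Longrightarrow> 0 < m' \<Longrightarrow> nudge m = nudge m' \<Longrightarrow> m = m'"
  by (auto simp: nudge_def split: if_splits)

lemma probe_cell_ne_search_cell:
  assumes "1 \<le> n" "0 < m" "m < 2 ^ n"
  shows "real (probe_cell L n k) \<noteq> real (a * 2 ^ n) + nudge m"
proof
  assume eq: "real (probe_cell L n k) = real (a * 2 ^ n) + nudge m"
  show False
  proof (cases "m = 1")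
    case True
    with eq have "real (2 * probe_cell L n k) = real (2 * (a * 2 ^ n) + 1)"
      by (simp add: nudge_def)
    then have "2 * probe_cell L n k = 2 * (a * 2 ^ n) + 1" by (simp only: of_nat_eq_iff)
    then show False by presburger
  next
    case False
    with eq have "real (probe_cell L n k) = real (a * 2 ^ n + m)" by (simp add: nudge_def)
    then have "probe_cell L n k = a * 2 ^ n + m" by (simp only: of_nat_eq_iff)
    then have "probe_cell L n k mod 2 ^ n = m" using assms(3) by simp
    with probe_cell_mod[OF assms(1), of L k] False assms(2) show False by (cases "L \<le> k") simp_all
  qed
qed

lemma distinct_query_path:
  assumes "1 \<le> L" "1 \<le> n" "b < 2 ^ n"
  shows "distinct (query_path L n a b)"
proof -
  define probes where "probes = map (\<lambda>k. real (probe_cell L n k)) [0..<2 * L]"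
  define offset where "offset t = search_offset n (b div 2 ^ (n - t)) t" for t
  define search where "search = map (\<lambda>t. real (a * 2 ^ n) + nudge (offset t)) [0..<n]"
  have offset: "0 < offset t" "offset t < 2 ^ n" if "t < n" for t
    using search_offset_pos search_offset_less[OF that div_power_two_less[OF assms(3)]] that
    by (simp_all add: offset_def)
  have "distinct probes"
    using inj_on_probe_cell[OF assms(2)] by (simp add: probes_def distinct_map inj_on_def)
  moreover have "distinct search"
    unfolding search_def distinct_map
  proof (rule conjI, simp, rule inj_onI)
    fix t t' assume "t \<in> set [0..<n]" "t' \<in> set [0..<n]"
      and "real (a * 2 ^ n) + nudge (offset t) = real (a * 2 ^ n) + nudge (offset t')"
    with offset have "offset t = offset t'" using nudge_inj by auto
    with \<open>t \<in> set [0..<n]\<close> \<open>t' \<in> set [0..<n]\<close> show "t = t'"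
      by (auto simp: offset_def dest: search_offset_eq_imp_step_eq)
  qed
  moreover have "set probes \<inter> set search = {}"
    using probe_cell_ne_search_cell[OF assms(2) offset] by (auto simp: probes_def search_def)
  moreover have "query_path L n a b = map (\<lambda>r. r * grid_step L n) (probes @ search)"
    by (simp add: query_path_def probes_def search_def search_query_def offset_def)
  moreover have "grid_step L n \<noteq> 0"
    using grid_step_pos[OF assms(1), of n] by simp
  ultimately show ?thesis
    by (auto simp: distinct_map inj_on_def query_path_def)
qed

lemma queries_private_query_path:
  assumes "1 \<le> L" "x \<in> {0..<1}" "y \<in> {1..L * 2 ^ n}"
  obtains a b where "a < L" "b < 2 ^ n" "queries (private_query L n) (2 * L + n) x y = query_path L n a b"
proof (cases "cell L n x mod 2 ^ n = 0")
  case True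
  with assms show ?thesis
    using queries_private_query[of L x n y]
    by (intro that[of "seed_block n y" "seed_offset n y"]) (auto simp: seed_block_less seed_offset_def)
next
  case False
  with assms show ?thesis
    using queries_private_query[of L x n y] block_less[of L x n]
    by (intro that[of "cell L n x div 2 ^ n" "cell L n x mod 2 ^ n"]) auto
qed

lemma seed_of_cell:
  assumes "a < L" "b < 2 ^ n"
  shows "a * 2 ^ n + b + 1 \<in> {1..L * 2 ^ n}"
    "seed_block n (a * 2 ^ n + b + 1) = a" "seed_offset n (a * 2 ^ n + b + 1) = b"
proof -
  have "(a + 1) * 2 ^ n \<le> L * 2 ^ n" using assms(1) by (intro mult_right_mono) auto
  with assms(2) show "a * 2 ^ n + b + 1 \<in> {1..L * 2 ^ n}" by simp
  show "seed_block n (a * 2 ^ n + b + 1) = a" "seed_offset n (a * 2 ^ n + b + 1) = b"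
    using assms(2) by (simp_all add: seed_block_def seed_offset_def)
qed

text \<open>The point of block p is shifted by \<open>p grid_step L n / L\<close> inside its first cell: points
  exactly 1 / L apart could be covered in pairs when \<delta> = 1 / L.\<close>

definition first_cell_point :: "nat \<Rightarrow> nat \<Rightarrow> nat \<Rightarrow> real" where
  "first_cell_point L n p = real p * (2 ^ n + 1 / real L) * grid_step L n"

lemma first_cell_point:
  assumes "1 \<le> L" "p < L"
  shows "first_cell_point L n p \<in> {0..<1}" "cell L n (first_cell_point L n p) = p * 2 ^ n"
proof -
  define z where "z = first_cell_point L n p"
  have h: "0 < grid_step L n" using grid_step_pos[OF assms(1)] .
  have frac: "0 \<le> real p / real L" "real p / real L < 1" using assms(1,2) by auto
  have z: "z = (real (p * 2 ^ n) + real p / real L) * grid_step L n"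
    by (simp add: z_def first_cell_point_def algebra_simps)
  have lower: "real (p * 2 ^ n) * grid_step L n \<le> z"
    unfolding z using h frac by (intro mult_right_mono) auto
  have upper: "z < real (p * 2 ^ n + 1) * grid_step L n"
    unfolding z using h frac by (intro mult_strict_right_mono) auto
  have "p * 2 ^ n + 1 \<le> p * 2 ^ n + 2 ^ n" by simp
  also have "\<dots> \<le> L * 2 ^ n"
    using mult_right_mono[of "p + 1" L "2 ^ n"] assms(2) by simp
  finally have "real (p * 2 ^ n + 1) \<le> real (L * 2 ^ n)" by (simp only: of_nat_le_iff)
  then have "real (p * 2 ^ n + 1) * grid_step L n \<le> 1"
    using assms(1) by (simp add: grid_step_def field_simps)
  moreover have "0 \<le> real (p * 2 ^ n) * grid_step L n" using h by simp
  ultimately show "first_cell_point L n p \<in> {0..<1}" using lower upper by (simp add: z_def)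
  then have "0 \<le> z" "z < 1" by (auto simp: z_def)
  with lower upper show "cell L n (first_cell_point L n p) = p * 2 ^ n"
    using le_cell_iff[OF assms(1), of z "p * 2 ^ n" n] le_cell_iff[OF assms(1), of z "p * 2 ^ n + 1" n]
    by (simp add: z_def)
qed

lemma first_cell_point_gap:
  assumes "1 \<le> L" "p < p'"
  shows "first_cell_point L n p + 1 / real L < first_cell_point L n p'"
proof -
  define C where "C = (2 ^ n + 1 / real L) * grid_step L n"
  have C: "1 / real L < C"
    using assms(1) by (simp add: C_def grid_step_def field_simps)
  moreover have "0 < 1 / real L" using assms(1) by simp
  ultimately have "0 \<le> C" by linarith
  then have "1 * C \<le> (real p' - real p) * C"
    using assms(2) by (intro mult_right_mono) auto
  moreover have "first_cell_point L n p' - first_cell_point L n p = (real p' - real p) * C"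
    by (simp add: first_cell_point_def C_def left_diff_distrib)
  ultimately show ?thesis using C by linarith
qed

lemma private_query_cover_number:
  assumes "1 \<le> L" "0 < \<delta>" "\<delta> \<le> 1 / real L"
    and "qs \<in> Qset (private_query L n) (2 * L + n) (L * 2 ^ n) x" "x \<in> {0..<1}"
  shows "L \<le> cover_number \<delta> (info_set (private_query L n) (2 * L + n) (L * 2 ^ n) qs)"
proof -
  obtain y where y: "y \<in> {1..L * 2 ^ n}" "queries (private_query L n) (2 * L + n) x y = qs"
    using assms(4) by (auto simp: Qset_def)
  then obtain a b where ab: "a < L" "b < 2 ^ n" "qs = query_path L n a b"
    using queries_private_query_path[OF assms(1,5) y(1)] by metis
  note seed = seed_of_cell[OF ab(1,2)]
  show ?thesis
  proof (rule separated_points_le_cover_number[OF assms(2), of _ L "first_cell_point L n"])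
    fix p assume "p < L"
    note point = first_cell_point[OF assms(1) this, of n]
    have "queries (private_query L n) (2 * L + n) (first_cell_point L n p) (a * 2 ^ n + b + 1) = qs"
      using queries_private_query[of L "first_cell_point L n p" n] point assms(1) seed ab(3) by simp
    with point(1) seed(1)
    show "first_cell_point L n p \<in> info_set (private_query L n) (2 * L + n) (L * 2 ^ n) qs"
      by (auto simp: info_set_def Qset_def)
  next
    fix p p' :: nat assume "p < p'"
    with first_cell_point_gap[OF assms(1) this, of n] assms(3)
    show "first_cell_point L n p + \<delta> < first_cell_point L n p'" by linarith
  qed (auto simp: info_set_def)
qed

lemma private_query_is_private:
  assumes "1 \<le> L" "1 \<le> n" "0 < \<delta>" "\<delta> \<le> 1 / real L" "grid_step L n \<le> \<epsilon>"
  shows "is_private \<epsilon> \<delta> L (2 * L + n) (L * 2 ^ n) (private_query L n) (private_estimate L n)"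
  unfolding is_private_def is_strategy_def
proof (intro conjI ballI allI impI)
  fix x :: real and y :: nat assume x: "x \<in> {0..<1}" and y: "y \<in> {1..L * 2 ^ n}"
  obtain a b where "a < L" "b < 2 ^ n" "queries (private_query L n) (2 * L + n) x y = query_path L n a b"
    using queries_private_query_path[OF assms(1) x y] by metis
  then show "distinct (queries (private_query L n) (2 * L + n) x y)"
    using distinct_query_path assms(1,2) by simp
  show "\<bar>estimate (private_query L n) (private_estimate L n) (2 * L + n) x y - x\<bar> \<le> \<epsilon> / 2"
    using private_estimate_accurate[OF assms(1) x, of n y] assms(5) by linarith
qed (use assms private_query_range private_estimate_range private_query_cover_number in auto)

section \<open>The optimal number of queries\<close>

lemma Nstar_le: "is_private \<epsilon> \<delta> L N Yc qf est \<Longrightarrow> Nstar \<epsilon> \<delta> L \<le> N"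
  unfolding Nstar_def by (rule Least_le) blast

lemma Nstar_private:
  assumes "is_private \<epsilon> \<delta> L N Yc qf est"
  obtains Yc' qf' est' where "is_private \<epsilon> \<delta> L (Nstar \<epsilon> \<delta> L) Yc' qf' est'"
proof -
  have "\<exists>Yc qf est. is_private \<epsilon> \<delta> L (Nstar \<epsilon> \<delta> L) Yc qf est"
    unfolding Nstar_def by (rule LeastI_ex) (use assms in blast)
  with that show ?thesis by blast
qed

lemma grid_step_le_ceiling_log:
  assumes "1 \<le> L" "0 < \<epsilon>"
  shows "grid_step L (nat \<lceil>log 2 (1 / (real L * \<epsilon>))\<rceil>) \<le> \<epsilon>"
proof -
  define n where "n = nat \<lceil>log 2 (1 / (real L * \<epsilon>))\<rceil>"
  have pos: "0 < real L * \<epsilon>" using assms by simp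
  have "log 2 (1 / (real L * \<epsilon>)) \<le> real n"
    unfolding n_def by linarith
  then have "1 / (real L * \<epsilon>) \<le> 2 ^ n"
    using pos by (simp add: log_le_iff powr_realpow)
  moreover have "0 < real L * 2 ^ n" using assms(1) by simp
  ultimately show ?thesis
    using pos unfolding n_def[symmetric] by (simp add: grid_step_def divide_le_eq field_simps)
qed

theorem theorem1:
  fixes \<epsilon> \<delta> :: real and L :: nat
  assumes "\<epsilon> > 0" and "\<delta> > 0" and "L \<ge> 2" and "2 * \<epsilon> < \<delta>" and "\<delta> \<le> 1 / real L"
  shows "(\<exists>N Yc qf est. is_private \<epsilon> \<delta> L N Yc qf est)
    \<and> max \<lceil>log 2 (1 / \<epsilon>)\<rceil> (\<lceil>log 2 (\<delta> / \<epsilon>)\<rceil> + 2 * int L - 4) \<le> int (Nstar \<epsilon> \<delta> L)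
    \<and> int (Nstar \<epsilon> \<delta> L) \<le> \<lceil>log 2 (1 / (real L * \<epsilon>))\<rceil> + 2 * int L"
proof -
  define n where "n = nat \<lceil>log 2 (1 / (real L * \<epsilon>))\<rceil>"
  have "\<delta> * real L \<le> 1" using assms(3,5) by (simp add: field_simps)
  moreover have "2 * \<epsilon> * real L < \<delta> * real L" using assms(3,4) by (intro mult_strict_right_mono) auto
  ultimately have "2 * \<epsilon> * real L < 1" by linarith
  then have "2 < 1 / (real L * \<epsilon>)" using assms(1,3) by (simp add: field_simps)
  then have "1 < log 2 (1 / (real L * \<epsilon>))" using assms(1,3) by (subst less_log_iff) auto
  then have "1 \<le> \<lceil>log 2 (1 / (real L * \<epsilon>))\<rceil>" by (simp add: one_le_ceiling)
  then have n: "int n = \<lceil>log 2 (1 / (real L * \<epsilon>))\<rceil>" "1 \<le> n" by (simp_all add: n_def le_nat_iff)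
  then have priv: "is_private \<epsilon> \<delta> L (2 * L + n) (L * 2 ^ n) (private_query L n) (private_estimate L n)"
    using assms grid_step_le_ceiling_log[of L \<epsilon>] by (intro private_query_is_private) (auto simp: n_def)
  then obtain Yc qf est where "is_private \<epsilon> \<delta> L (Nstar \<epsilon> \<delta> L) Yc qf est"
    by (rule Nstar_private)
  moreover have "\<delta> \<le> 1" using assms(3,5) by (simp add: divide_le_eq_1 order_trans)
  ultimately have lower: "\<lceil>log 2 (1 / \<epsilon>)\<rceil> \<le> int (Nstar \<epsilon> \<delta> L)"
      "\<lceil>log 2 (\<delta> / \<epsilon>)\<rceil> + 2 * int L - 4 \<le> int (Nstar \<epsilon> \<delta> L)"
    using private_lower_bounds assms by blast+
  have upper: "int (Nstar \<epsilon> \<delta> L) \<le> \<lceil>log 2 (1 / (real L * \<epsilon>))\<rceil> + 2 * int L"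
    using Nstar_le[OF priv] n(1) by linarith
  show ?thesis using priv lower upper by auto
qed

end
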